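(* For every finite graph $\Gamma$ there is a finite group $G$ such that $\Gamma$ is isomorphic to an induced subgraph of the difference graph $\mathcal{D}(G)$. Moreover, $G$ can be chosen to be a cyclic group of squarefree order.
   Context: For a finite group $G$ with identity $e$: the intersection power graph $\mathcal{G}_I(G)$ has vertex set $G$, two distinct non-identity vertices $x,y$ being adjacent iff $\langle x\rangle\cap\langle y\rangle\neq\{e\}$, and $e$ being adjacent to every other vertex. The power graph $\mathcal{P}(G)$ has vertex set $G$, two distinct vertices being adjacent iff one is a power of the other. The difference graph $\mathcal{D}(G)$ is the graph with edge set $E(\mathcal{G}_I(G))\setminus E(\mathcal{P}(G))$ on vertex set $G$, with all isolated vertices removed. *)

theory Defs
  imports "HOL-Algebra.Algebra" "HOL-Computational_Algebra.Squarefree"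
begin

definition finite_simple_graph :: "'a set \<Rightarrow> ('a \<Rightarrow> 'a \<Rightarrow> bool) \<Rightarrow> bool" where
  "finite_simple_graph V E \<longleftrightarrow> finite V \<and>
     (\<forall>x y. E x y \<longrightarrow> x \<in> V \<and> y \<in> V) \<and>
     (\<forall>x y. E x y \<longrightarrow> E y x) \<and> (\<forall>x. \<not> E x x)"

definition ipg_edge :: "('g, 'b) monoid_scheme \<Rightarrow> 'g \<Rightarrow> 'g \<Rightarrow> bool" where
  "ipg_edge G x y \<longleftrightarrow> x \<in> carrier G \<and> y \<in> carrier G \<and> x \<noteq> y \<and>
     (x = \<one>\<^bsub>G\<^esub> \<or> y = \<one>\<^bsub>G\<^esub> \<or>
      generate G {x} \<inter> generate G {y} \<noteq> {\<one>\<^bsub>G\<^esub>})"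

definition pg_edge :: "('g, 'b) monoid_scheme \<Rightarrow> 'g \<Rightarrow> 'g \<Rightarrow> bool" where
  "pg_edge G x y \<longleftrightarrow> x \<in> carrier G \<and> y \<in> carrier G \<and> x \<noteq> y \<and>
     ((\<exists>k::int. y = x [^]\<^bsub>G\<^esub> k) \<or> (\<exists>k::int. x = y [^]\<^bsub>G\<^esub> k))"

definition diff_edge :: "('g, 'b) monoid_scheme \<Rightarrow> 'g \<Rightarrow> 'g \<Rightarrow> bool" where
  "diff_edge G x y \<longleftrightarrow> ipg_edge G x y \<and> \<not> pg_edge G x y"

definition diff_verts :: "('g, 'b) monoid_scheme \<Rightarrow> 'g set" where
  "diff_verts G = {x \<in> carrier G. \<exists>y. diff_edge G x y}"

definition induced_subgraph_iso ::
  "'a set \<Rightarrow> ('a \<Rightarrow> 'a \<Rightarrow> bool) \<Rightarrow> 'c set \<Rightarrow> ('c \<Rightarrow> 'c \<Rightarrow> bool) \<Rightarrow> bool" where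
  "induced_subgraph_iso V E W F \<longleftrightarrow>
     (\<exists>f. inj_on f V \<and> f ` V \<subseteq> W \<and> (\<forall>x\<in>V. \<forall>y\<in>V. E x y \<longleftrightarrow> F (f x) (f y)))"

end

theory Submission
  imports Defs
begin

(* Let U be a finite set of primes and N = \<Prod>U. In the cyclic group Z_N the subgroup generated by
   a divisor d of N consists of the multiples of d, so for divisors a, b the power graph has an
   edge iff one divides the other, and the intersection power graph has one iff lcm a b < N.
   Writing a = \<Prod>(U - A) turns these conditions into B \<subseteq> A and A \<inter> B \<noteq> {}: on such
   divisors the difference graph is the overlap graph of the subsets A of U.  Every finite graph
   is an induced subgraph of an overlap graph: give each vertex two private labels and one label
   per incident edge; the set of one private label and an extra label overlaps the vertex's set,
   so no vertex is isolated in the difference graph. *)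

section \<open>Overlap graphs\<close>

definition overlapping :: "'a set \<Rightarrow> 'a set \<Rightarrow> bool" where
  "overlapping A B \<longleftrightarrow> A \<inter> B \<noteq> {} \<and> \<not> A \<subseteq> B \<and> \<not> B \<subseteq> A"

lemma overlapping_image_iff:
  assumes "inj_on f C" "A \<subseteq> C" "B \<subseteq> C"
  shows "overlapping (f ` A) (f ` B) \<longleftrightarrow> overlapping A B"
proof -
  have "f ` A \<subseteq> f ` B \<longleftrightarrow> A \<subseteq> B" "f ` B \<subseteq> f ` A \<longleftrightarrow> B \<subseteq> A"
    using assms by (auto simp: inj_on_image_mem_iff image_subset_iff subset_eq)
  moreover have "f ` A \<inter> f ` B = f ` (A \<inter> B)"
    using inj_on_image_Int[OF assms] by simp
  ultimately show ?thesis
    by (simp add: overlapping_def)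
qed

definition overlap_verts :: "'l set \<Rightarrow> 'l set set" where
  "overlap_verts L = {A. A \<subseteq> L \<and> (\<exists>B. B \<subseteq> L \<and> overlapping A B)}"

lemma induced_subgraph_iso_trans:
  assumes "induced_subgraph_iso V1 E1 V2 E2" "induced_subgraph_iso V2 E2 V3 E3"
  shows "induced_subgraph_iso V1 E1 V3 E3"
proof -
  obtain f where f: "inj_on f V1" "f ` V1 \<subseteq> V2" "\<forall>x\<in>V1. \<forall>y\<in>V1. E1 x y \<longleftrightarrow> E2 (f x) (f y)"
    using assms(1) unfolding induced_subgraph_iso_def by blast
  obtain g where g: "inj_on g V2" "g ` V2 \<subseteq> V3" "\<forall>x\<in>V2. \<forall>y\<in>V2. E2 x y \<longleftrightarrow> E3 (g x) (g y)"
    using assms(2) unfolding induced_subgraph_iso_def by blast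
  have "inj_on (g \<circ> f) V1"
    using f(1,2) g(1) by (auto intro: comp_inj_on inj_on_subset)
  moreover have "(g \<circ> f) ` V1 \<subseteq> V3"
    using f(2) g(2) by auto
  moreover have "E1 x y \<longleftrightarrow> E3 ((g \<circ> f) x) ((g \<circ> f) y)" if "x \<in> V1" "y \<in> V1" for x y
  proof -
    have "f x \<in> V2" "f y \<in> V2"
      using f(2) that by auto
    then show ?thesis
      using f(3) g(3) that by simp
  qed
  ultimately show ?thesis
    unfolding induced_subgraph_iso_def by blast
qed

(* Twin v is needed for isolated vertices v: a singleton overlaps no set. *)
datatype 'v graph_label = Own 'v | Twin 'v | Link "'v set" | Hub

definition vertex_labels :: "('v \<Rightarrow> 'v \<Rightarrow> bool) \<Rightarrow> 'v \<Rightarrow> 'v graph_label set" where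
  "vertex_labels E v = {Own v, Twin v} \<union> (\<lambda>u. Link {u, v}) ` {u. E u v}"

definition witness_labels :: "'v \<Rightarrow> 'v graph_label set" where
  "witness_labels v = {Own v, Hub}"

lemma inj_vertex_labels: "inj (vertex_labels E)"
proof (rule injI)
  fix u v assume "vertex_labels E u = vertex_labels E v"
  moreover have "Own u \<in> vertex_labels E u"
    by (simp add: vertex_labels_def)
  ultimately have "Own u \<in> vertex_labels E v"
    by simp
  then show "u = v"
    by (auto simp: vertex_labels_def)
qed

lemma overlapping_vertex_witness_labels: "overlapping (vertex_labels E v) (witness_labels v)"
proof -
  have "Own v \<in> vertex_labels E v \<inter> witness_labels v"
    "Twin v \<in> vertex_labels E v - witness_labels v"
    "Hub \<in> witness_labels v - vertex_labels E v"
    by (auto simp: vertex_labels_def witness_labels_def)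
  then show ?thesis
    unfolding overlapping_def by blast
qed

lemma overlapping_vertex_labels_iff:
  assumes "symp E" "irreflp E"
  shows "overlapping (vertex_labels E u) (vertex_labels E v) \<longleftrightarrow> E u v"
proof (cases "u = v")
  case True
  then show ?thesis
    using irreflpD[OF assms(2)] by (simp add: overlapping_def)
next
  case False
  have "Own u \<in> vertex_labels E u - vertex_labels E v" "Own v \<in> vertex_labels E v - vertex_labels E u"
    using False by (auto simp: vertex_labels_def)
  moreover have "vertex_labels E u \<inter> vertex_labels E v \<noteq> {} \<longleftrightarrow> E u v"
  proof
    assume "vertex_labels E u \<inter> vertex_labels E v \<noteq> {}"
    then obtain w w' where "E w u" "E w' v" "{w, u} = {w', v}"
      using False by (auto simp: vertex_labels_def)
    then show "E u v"
      using False sympD[OF assms(1)] by (auto simp: doubleton_eq_iff)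
  next
    assume "E u v"
    then have "Link {u, v} \<in> vertex_labels E u \<inter> vertex_labels E v"
      using sympD[OF assms(1)] by (auto simp: vertex_labels_def insert_commute)
    then show "vertex_labels E u \<inter> vertex_labels E v \<noteq> {}"
      by blast
  qed
  ultimately show ?thesis
    by (auto simp: overlapping_def)
qed

lemma finite_graph_induced_in_overlap_graph:
  fixes V :: "'v set" and E :: "'v \<Rightarrow> 'v \<Rightarrow> bool"
  assumes "finite_simple_graph V E"
  shows "\<exists>L :: 'v graph_label set. finite L \<and> induced_subgraph_iso V E (overlap_verts L) overlapping"
proof -
  have "finite V" and edges: "\<And>u v. E u v \<Longrightarrow> u \<in> V \<and> v \<in> V" and "symp E" "irreflp E"
    using assms unfolding finite_simple_graph_def by (auto intro: sympI irreflpI)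
  define L where "L = (\<Union>v\<in>V. vertex_labels E v \<union> witness_labels v)"
  have "finite {u. E u v}" for v
    using \<open>finite V\<close> edges by (auto intro: finite_subset)
  then have "finite L"
    using \<open>finite V\<close> by (simp add: L_def vertex_labels_def witness_labels_def)
  moreover have "vertex_labels E v \<in> overlap_verts L" if "v \<in> V" for v
  proof -
    have "vertex_labels E v \<subseteq> L" "witness_labels v \<subseteq> L"
      using that unfolding L_def by blast+
    then show ?thesis
      using overlapping_vertex_witness_labels[of E v] unfolding overlap_verts_def by blast
  qed
  moreover have "inj_on (vertex_labels E) V"
    using inj_vertex_labels by (rule inj_on_subset) simp
  ultimately have "finite L \<and> induced_subgraph_iso V E (overlap_verts L) overlapping"
    using overlapping_vertex_labels_iff[OF \<open>symp E\<close> \<open>irreflp E\<close>]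
    unfolding induced_subgraph_iso_def by (intro conjI exI[of _ "vertex_labels E"]) auto
  then show ?thesis
    by blast
qed

section \<open>The cyclic group of order n\<close>

(* A copy of integer_mod_group with carrier in nat, as the statement asks for a nat monoid. *)
definition nat_mod_group :: "nat \<Rightarrow> nat monoid" where
  "nat_mod_group n = \<lparr>carrier = {..<n}, monoid.mult = (\<lambda>a b. (a + b) mod n), one = 0\<rparr>"

lemma nat_mod_group_simps [simp]:
  "carrier (nat_mod_group n) = {..<n}"
  "x \<otimes>\<^bsub>nat_mod_group n\<^esub> y = (x + y) mod n"
  "\<one>\<^bsub>nat_mod_group n\<^esub> = 0"
  by (simp_all add: nat_mod_group_def)

lemma group_nat_mod_group: "0 < n \<Longrightarrow> group (nat_mod_group n)"
proof (rule groupI)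
  fix x assume "0 < n" "x \<in> carrier (nat_mod_group n)"
  then show "\<exists>y\<in>carrier (nat_mod_group n). y \<otimes>\<^bsub>nat_mod_group n\<^esub> x = \<one>\<^bsub>nat_mod_group n\<^esub>"
    by (intro bexI[of _ "(n - x) mod n"]) (auto simp: mod_add_left_eq)
qed (auto simp: mod_add_left_eq mod_add_right_eq add.assoc)

lemma inv_nat_mod_group:
  "x < n \<Longrightarrow> inv\<^bsub>nat_mod_group n\<^esub> x = (n - x) mod n"
  by (intro group.inv_equality group_nat_mod_group) (auto simp: mod_add_left_eq)

lemma nat_pow_nat_mod_group:
  "x < n \<Longrightarrow> x [^]\<^bsub>nat_mod_group n\<^esub> (k::nat) = (k * x) mod n"
  by (induction k) (simp_all add: mod_add_right_eq add.commute)

lemma order_nat_mod_group: "order (nat_mod_group n) = n"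
  by (simp add: order_def)

lemma cyclic_nat_mod_group:
  assumes "0 < n" shows "cyclic_group (nat_mod_group n)"
proof -
  interpret group "nat_mod_group n" by (rule group_nat_mod_group[OF assms])
  have gen: "1 mod n \<in> carrier (nat_mod_group n)"
    using assms by simp
  have pow: "y = (1 mod n) [^]\<^bsub>nat_mod_group n\<^esub> int y" if "y < n" for y
    using that assms by (simp add: int_pow_int nat_pow_nat_mod_group mod_mult_right_eq)
  have "carrier (nat_mod_group n) \<subseteq> range (\<lambda>k::int. (1 mod n) [^]\<^bsub>nat_mod_group n\<^esub> k)"
  proof
    fix y assume "y \<in> carrier (nat_mod_group n)"
    then have "y = (1 mod n) [^]\<^bsub>nat_mod_group n\<^esub> int y"
      using pow by simp
    then show "y \<in> range (\<lambda>k::int. (1 mod n) [^]\<^bsub>nat_mod_group n\<^esub> k)"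
      by (rule range_eqI)
  qed
  then have "carrier (nat_mod_group n) = range (\<lambda>k::int. (1 mod n) [^]\<^bsub>nat_mod_group n\<^esub> k)"
    using int_pow_closed[OF gen] by blast
  with gen show ?thesis
    unfolding cyclic_group by blast
qed

lemma generate_nat_mod_group_divisor:
  assumes "d dvd n" "d < n"
  shows "generate (nat_mod_group n) {d} = {y. y < n \<and> d dvd y}"
proof
  show "generate (nat_mod_group n) {d} \<subseteq> {y. y < n \<and> d dvd y}"
  proof
    fix y assume "y \<in> generate (nat_mod_group n) {d}"
    then show "y \<in> {y. y < n \<and> d dvd y}"
      by induction (use assms in \<open>auto simp: inv_nat_mod_group intro!: dvd_mod\<close>)
  qed
next
  interpret group "nat_mod_group n" by (rule group_nat_mod_group) (use assms in simp)
  show "{y. y < n \<and> d dvd y} \<subseteq> generate (nat_mod_group n) {d}"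
  proof
    fix y assume "y \<in> {y. y < n \<and> d dvd y}"
    then obtain t where "y < n" "y = d * t" by auto
    then have "y = d [^]\<^bsub>nat_mod_group n\<^esub> int t"
      using assms by (simp add: int_pow_int nat_pow_nat_mod_group mult.commute)
    then show "y \<in> generate (nat_mod_group n) {d}"
      using assms by (auto simp: generate_pow)
  qed
qed

lemma nonzero_multiples_below_iff:
  fixes m n :: nat
  assumes "m \<noteq> 0" "0 < n"
  shows "{y. y < n \<and> m dvd y} \<noteq> {0} \<longleftrightarrow> m < n"
proof
  assume ne: "{y. y < n \<and> m dvd y} \<noteq> {0}"
  show "m < n"
  proof (rule ccontr)
    assume "\<not> m < n"
    then have "y < n \<and> m dvd y \<longleftrightarrow> y = 0" for y
      using assms(2) dvd_imp_le[of m y] by (cases "y = 0") auto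
    with ne show False
      by simp
  qed
next
  assume "m < n"
  then have "m \<in> {y. y < n \<and> m dvd y}" by simp
  with assms(1) show "{y. y < n \<and> m dvd y} \<noteq> {0}"
    by (metis singletonD)
qed

lemma diff_edge_nat_mod_group_divisors:
  assumes "a dvd n" "b dvd n" "0 < n"
  shows "diff_edge (nat_mod_group n) a b \<longleftrightarrow>
           a < n \<and> b < n \<and> \<not> a dvd b \<and> \<not> b dvd a \<and> lcm a b < n"
proof (cases "a < n \<and> b < n")
  case False
  then show ?thesis by (auto simp: diff_edge_def ipg_edge_def)
next
  case True
  interpret group "nat_mod_group n" by (rule group_nat_mod_group[OF assms(3)])
  have nonzero: "a \<noteq> 0" "b \<noteq> 0" "lcm a b \<noteq> 0"
    using assms by auto
  have gen_a: "generate (nat_mod_group n) {a} = {y. y < n \<and> a dvd y}"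
    and gen_b: "generate (nat_mod_group n) {b} = {y. y < n \<and> b dvd y}"
    using True assms by (simp_all add: generate_nat_mod_group_divisor)
  have power_iff: "(\<exists>k::int. y = x [^]\<^bsub>nat_mod_group n\<^esub> k) \<longleftrightarrow> y \<in> generate (nat_mod_group n) {x}"
    if "x < n" for x y
    using that by (auto simp: generate_pow)
  have pg: "pg_edge (nat_mod_group n) a b \<longleftrightarrow> a \<noteq> b \<and> (a dvd b \<or> b dvd a)"
    using True unfolding pg_edge_def by (simp add: power_iff gen_a gen_b)
  have "generate (nat_mod_group n) {a} \<inter> generate (nat_mod_group n) {b} =
          {y. y < n \<and> lcm a b dvd y}"
    by (auto simp: gen_a gen_b)
  then have ipg: "ipg_edge (nat_mod_group n) a b \<longleftrightarrow> a \<noteq> b \<and> lcm a b < n"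
    using True nonzero nonzero_multiples_below_iff[of "lcm a b" n] assms(3) by (simp add: ipg_edge_def)
  show ?thesis
    using True pg ipg dvd_refl[of a] unfolding diff_edge_def by blast
qed

section \<open>Products of distinct primes\<close>

lemma prime_factorization_prod_primes:
  fixes P :: "nat set"
  assumes "finite P" "\<forall>p\<in>P. Factorial_Ring.prime p"
  shows "prime_factorization (\<Prod>P) = mset_set P"
proof -
  have "\<Prod>P = prod_mset (mset_set P)"
    by (simp add: prod_unfold_prod_mset)
  then show ?thesis
    using assms by (auto intro: prime_factorization_prod_mset_primes)
qed

lemma prod_primes_pos:
  fixes P :: "nat set"
  assumes "\<forall>p\<in>P. Factorial_Ring.prime p"
  shows "0 < \<Prod>P"
  using assms by (intro prod_pos) (simp add: prime_gt_0_nat)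

lemma prod_primes_dvd_iff:
  fixes P Q :: "nat set"
  assumes "finite P" "finite Q" "\<forall>p\<in>P. Factorial_Ring.prime p" "\<forall>q\<in>Q. Factorial_Ring.prime q"
  shows "\<Prod>P dvd \<Prod>Q \<longleftrightarrow> P \<subseteq> Q"
proof -
  have "\<Prod>P \<noteq> 0" "\<Prod>Q \<noteq> 0"
    using prod_primes_pos[OF assms(3)] prod_primes_pos[OF assms(4)] by simp_all
  then have "\<Prod>P dvd \<Prod>Q \<longleftrightarrow> prime_factorization (\<Prod>P) \<subseteq># prime_factorization (\<Prod>Q)"
    by (simp add: prime_factorization_subset_iff_dvd)
  then show ?thesis
    using assms by (simp add: prime_factorization_prod_primes)
qed

lemma prod_primes_eq_iff:
  fixes P Q :: "nat set"
  assumes "finite P" "finite Q" "\<forall>p\<in>P. Factorial_Ring.prime p" "\<forall>q\<in>Q. Factorial_Ring.prime q"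
  shows "\<Prod>P = \<Prod>Q \<longleftrightarrow> P = Q"
  using prod_primes_dvd_iff[OF assms] prod_primes_dvd_iff[OF assms(2,1,4,3)]
  by (metis dvd_refl subset_antisym)

lemma prod_primes_less_iff:
  fixes P Q :: "nat set"
  assumes "finite Q" "\<forall>q\<in>Q. Factorial_Ring.prime q" "P \<subseteq> Q"
  shows "\<Prod>P < \<Prod>Q \<longleftrightarrow> P \<noteq> Q"
proof -
  have P: "finite P" "\<forall>p\<in>P. Factorial_Ring.prime p"
    using assms finite_subset by auto
  have "\<Prod>P dvd \<Prod>Q"
    using prod_primes_dvd_iff[OF P(1) assms(1) P(2) assms(2)] assms(3) by simp
  then have "\<Prod>P \<le> \<Prod>Q"
    using prod_primes_pos[OF assms(2)] by (rule dvd_imp_le)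
  then show ?thesis
    using prod_primes_eq_iff[OF P(1) assms(1) P(2) assms(2)] by linarith
qed

lemma lcm_prod_primes:
  fixes P Q :: "nat set"
  assumes "finite P" "finite Q" "\<forall>p\<in>P. Factorial_Ring.prime p" "\<forall>q\<in>Q. Factorial_Ring.prime q"
  shows "lcm (\<Prod>P) (\<Prod>Q) = \<Prod>(P \<union> Q)"
proof -
  have PQ: "finite (P \<union> Q)" "\<forall>p\<in>P \<union> Q. Factorial_Ring.prime p"
    using assms by auto
  have nonzero: "\<Prod>P \<noteq> 0" "\<Prod>Q \<noteq> 0" "\<Prod>(P \<union> Q) \<noteq> 0"
    using prod_primes_pos[OF assms(3)] prod_primes_pos[OF assms(4)] prod_primes_pos[OF PQ(2)]
    by simp_all
  have "prime_factorization (lcm (\<Prod>P) (\<Prod>Q)) = mset_set P \<union># mset_set Q"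
    using nonzero assms by (simp add: prime_factorization_lcm prime_factorization_prod_primes)
  also have "\<dots> = mset_set (P \<union> Q)"
    using assms(1,2) by (intro multiset_eqI) (simp add: count_mset_set')
  also have "\<dots> = prime_factorization (\<Prod>(P \<union> Q))"
    using PQ by (simp add: prime_factorization_prod_primes)
  finally show ?thesis
    using nonzero prime_factorization_unique[of "lcm (\<Prod>P) (\<Prod>Q)" "\<Prod>(P \<union> Q)"] by simp
qed

lemma squarefree_prod_primes:
  fixes P :: "nat set"
  assumes "\<forall>p\<in>P. Factorial_Ring.prime p"
  shows "squarefree (\<Prod>P)"
proof (rule squarefree_prod_coprime)
  fix p q assume "p \<in> P" "q \<in> P" "p \<noteq> q"
  with assms show "coprime p q"
    by (simp add: primes_coprime)
next
  fix p assume "p \<in> P"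
  with assms show "squarefree p"
    by (simp add: squarefree_prime)
qed

lemma diff_edge_nat_mod_group_prod_primes:
  fixes U :: "nat set"
  assumes "finite U" "\<forall>p\<in>U. Factorial_Ring.prime p" "A \<subseteq> U" "B \<subseteq> U"
  shows "diff_edge (nat_mod_group (\<Prod>U)) (\<Prod>(U - A)) (\<Prod>(U - B)) \<longleftrightarrow> overlapping A B"
proof -
  have finite: "finite (U - C)" and primes: "\<forall>p\<in>U - C. Factorial_Ring.prime p" for C
    using assms(1,2) by auto
  have dvd_iff: "\<Prod>(U - C) dvd \<Prod>(U - D) \<longleftrightarrow> D \<subseteq> C" if "D \<subseteq> U" for C D
    using prod_primes_dvd_iff[OF finite finite primes primes] that by auto
  have less_iff: "\<Prod>(U - C) < \<Prod>U \<longleftrightarrow> C \<noteq> {}" if "C \<subseteq> U" for C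
    using prod_primes_less_iff[OF assms(1,2), of "U - C"] that by auto
  have "lcm (\<Prod>(U - A)) (\<Prod>(U - B)) = \<Prod>(U - A \<inter> B)"
    using lcm_prod_primes[OF finite finite primes primes] by (simp add: Diff_Int)
  moreover have "\<Prod>(U - C) dvd \<Prod>U" for C
    using dvd_iff[of "{}" C] by simp
  moreover have "0 < \<Prod>U"
    using assms(2) by (rule prod_primes_pos)
  moreover have "A \<inter> B \<subseteq> U"
    using assms(3) by blast
  ultimately have "diff_edge (nat_mod_group (\<Prod>U)) (\<Prod>(U - A)) (\<Prod>(U - B)) \<longleftrightarrow>
      A \<noteq> {} \<and> B \<noteq> {} \<and> \<not> B \<subseteq> A \<and> \<not> A \<subseteq> B \<and> A \<inter> B \<noteq> {}"
    using assms(3,4) dvd_iff[of A B] dvd_iff[of B A] less_iff[of A] less_iff[of B] less_iff[of "A \<inter> B"]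
    by (simp add: diff_edge_nat_mod_group_divisors)
  then show ?thesis
    by (auto simp: overlapping_def)
qed

lemma overlap_graph_induced_in_diff_graph:
  fixes L :: "'l set"
  assumes "finite L"
  shows "\<exists>n>0. squarefree n \<and>
    induced_subgraph_iso (overlap_verts L) overlapping
      (diff_verts (nat_mod_group n)) (diff_edge (nat_mod_group n))"
proof -
  obtain q :: "'l \<Rightarrow> nat" where q: "inj_on q L" "q ` L \<subseteq> {p. Factorial_Ring.prime p}"
    using finite_lepoll_infinite[OF primes_infinite assms] unfolding lepoll_def by blast
  define U where "U = q ` L"
  have U: "finite U" "\<forall>p\<in>U. Factorial_Ring.prime p"
    using assms q(2) unfolding U_def by auto
  define code where "code A = \<Prod>(U - q ` A)" for A
  define G where "G = nat_mod_group (\<Prod>U)"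
  have edge: "diff_edge G (code A) (code B) \<longleftrightarrow> overlapping A B" if "A \<subseteq> L" "B \<subseteq> L" for A B
  proof -
    have "q ` A \<subseteq> U" "q ` B \<subseteq> U"
      using that unfolding U_def by auto
    then have "diff_edge G (code A) (code B) \<longleftrightarrow> overlapping (q ` A) (q ` B)"
      unfolding code_def G_def by (rule diff_edge_nat_mod_group_prod_primes[OF U])
    also have "\<dots> \<longleftrightarrow> overlapping A B"
      using q(1) that by (rule overlapping_image_iff)
    finally show ?thesis .
  qed
  have "inj_on code (Pow L)"
  proof (rule inj_onI)
    fix A B assume A: "A \<in> Pow L" and B: "B \<in> Pow L" and eq: "code A = code B"
    have finite: "finite (U - C)" and primes: "\<forall>p\<in>U - C. Factorial_Ring.prime p" for C
      using U by auto
    have "U - q ` A = U - q ` B"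
      using eq prod_primes_eq_iff[OF finite[of "q ` A"] finite[of "q ` B"] primes primes]
      unfolding code_def by simp
    moreover have "q ` A \<subseteq> U" "q ` B \<subseteq> U"
      using A B unfolding U_def by auto
    ultimately have "q ` A = q ` B"
      by (metis Diff_Diff_Int inf.absorb2)
    then show "A = B"
      using inj_on_image_eq_iff[OF q(1)] A B by simp
  qed
  then have "inj_on code (overlap_verts L)"
    by (rule inj_on_subset) (auto simp: overlap_verts_def)
  moreover have "code A \<in> diff_verts G" if A: "A \<in> overlap_verts L" for A
  proof -
    obtain B where "A \<subseteq> L" "B \<subseteq> L" "overlapping A B"
      using A unfolding overlap_verts_def by blast
    then have "diff_edge G (code A) (code B)"
      using edge by blast
    then show ?thesis
      unfolding diff_verts_def diff_edge_def ipg_edge_def by blast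
  qed
  moreover have "overlapping A B \<longleftrightarrow> diff_edge G (code A) (code B)"
    if "A \<in> overlap_verts L" "B \<in> overlap_verts L" for A B
    using that edge unfolding overlap_verts_def by blast
  ultimately have "induced_subgraph_iso (overlap_verts L) overlapping (diff_verts G) (diff_edge G)"
    unfolding induced_subgraph_iso_def by blast
  moreover have "0 < \<Prod>U" "squarefree (\<Prod>U)"
    using U(2) by (rule prod_primes_pos, rule squarefree_prod_primes)
  ultimately show ?thesis
    unfolding G_def by blast
qed

theorem theorem3p8:
  fixes V :: "'a set" and E :: "'a \<Rightarrow> 'a \<Rightarrow> bool"
  assumes "finite_simple_graph V E"
  shows "\<exists>G :: nat monoid. group G \<and> finite (carrier G) \<and> cyclic_group G \<and>
           squarefree (order G) \<and>
           induced_subgraph_iso V E (diff_verts G) (diff_edge G)"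
proof -
  obtain L :: "'a graph_label set"
    where "finite L" and graph: "induced_subgraph_iso V E (overlap_verts L) overlapping"
    using finite_graph_induced_in_overlap_graph[OF assms] by blast
  obtain n where "0 < n" "squarefree n" and overlap:
    "induced_subgraph_iso (overlap_verts L) overlapping
       (diff_verts (nat_mod_group n)) (diff_edge (nat_mod_group n))"
    using overlap_graph_induced_in_diff_graph[OF \<open>finite L\<close>] by blast
  show ?thesis
  proof (intro exI conjI)
    show "group (nat_mod_group n)" "cyclic_group (nat_mod_group n)"
      using \<open>0 < n\<close> by (rule group_nat_mod_group, rule cyclic_nat_mod_group)
    show "finite (carrier (nat_mod_group n))" "squarefree (order (nat_mod_group n))"
      using \<open>squarefree n\<close> by (simp_all add: order_nat_mod_group)
    show "induced_subgraph_iso V E (diff_verts (nat_mod_group n)) (diff_edge (nat_mod_group n))"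
      using graph overlap by (rule induced_subgraph_iso_trans)
  qed
qed

end
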